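(* Let $h\ge0$ and $u\in\mathscr B_h$. Then $u$ is dominated by $L+h$, i.e. $u(y)-u(x)\le\phi_h(x,y)$ for all $x,y\in E^N$.
   Context: $E=\mathbb R^d$, $d\ge2$; $N$ bodies with masses $m_i>0$; mass inner product $\langle x,y\rangle=\sum_i m_i(x_i,y_i)$ on $E^N$ with norm $\|\cdot\|$; $U(x)=\sum_{i<j}\frac{m_im_j}{|x_i-x_j|}$; $L(x,v)=\frac12\|v\|^2+U(x)$. For $h\ge0$, $A_h(\gamma)=\int_a^b(L(\gamma,\dot\gamma)+h)\,dt$ for absolutely continuous $\gamma:[a,b]\to E^N$, and $\phi_h(x,y)=\inf A_h(\gamma)$ over absolutely continuous curves $\gamma:[0,T]\to E^N$, $T>0$, from $x$ to $y$. $\mathscr B_h$ is the class of all locally uniform limits on $E^N$ of functions $x\mapsto\phi_{h_n}(0,p_n)-\phi_{h_n}(x,p_n)$ with $h_n\ge0$, $h_n\to h$, $p_n\in E^N$, $\|p_n\|\to+\infty$. *)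

theory Defs
  imports "HOL-Analysis.Analysis"
begin

(* Configurations in E^N are x :: real^'d^'n, body i at position x $ i \<in> E = real^'d.
   Masses m :: 'n \<Rightarrow> real. *)

definition mnorm :: "('n::finite \<Rightarrow> real) \<Rightarrow> real^'d^'n \<Rightarrow> real" where
  "mnorm m x = sqrt (\<Sum>i\<in>UNIV. m i * (norm (x $ i))^2)"

(* Newtonian potential sum_{i<j} m_i m_j/|x_i-x_j| (= half the sum over ordered pairs i~=j), +\<infinity> at collisions *)
definition Upot :: "('n::finite \<Rightarrow> real) \<Rightarrow> real^'d^'n \<Rightarrow> ennreal" where
  "Upot m x = (if \<exists>i j. i \<noteq> j \<and> x $ i = x $ j then \<infinity>
     else ennreal ((\<Sum>(i,j)\<in>{(i,j). i \<noteq> j}. m i * m j / dist (x $ i) (x $ j)) / 2))"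

definition Lag :: "('n::finite \<Rightarrow> real) \<Rightarrow> real^'d^'n \<Rightarrow> real^'d^'n \<Rightarrow> ennreal" where
  "Lag m x v = ennreal ((mnorm m v)^2 / 2) + Upot m x"

definition abs_cont_on :: "real \<Rightarrow> real \<Rightarrow> (real \<Rightarrow> 'a::real_normed_vector) \<Rightarrow> bool" where
  "abs_cont_on a b f \<longleftrightarrow> (\<forall>e>0. \<exists>d>0. \<forall>D. finite D \<and> (\<forall>(u,v)\<in>D. a \<le> u \<and> u < v \<and> v \<le> b)
      \<and> disjoint_family_on (\<lambda>(u,v). {u<..<v}) D \<and> (\<Sum>(u,v)\<in>D. v - u) < d
      \<longrightarrow> (\<Sum>(u,v)\<in>D. norm (f v - f u)) < e)"

definition action :: "('n::finite \<Rightarrow> real) \<Rightarrow> real \<Rightarrow> real \<Rightarrow> real \<Rightarrow> (real \<Rightarrow> real^'d^'n) \<Rightarrow> ennreal" where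
  "action m h a b g = (\<integral>\<^sup>+ t\<in>{a..b}. Lag m (g t) (vector_derivative g (at t within {a..b})) + ennreal h \<partial>lborel)"

definition phi :: "('n::finite \<Rightarrow> real) \<Rightarrow> real \<Rightarrow> real^'d^'n \<Rightarrow> real^'d^'n \<Rightarrow> ennreal" where
  "phi m h x y = (INF (T, g) \<in> {(T, g). T > 0 \<and> abs_cont_on 0 T g \<and> g 0 = x \<and> g T = y}. action m h 0 T g)"

definition Bh :: "('n::finite \<Rightarrow> real) \<Rightarrow> real \<Rightarrow> (real^'d^'n \<Rightarrow> real) set" where
  "Bh m h = {u. \<exists>hs :: nat \<Rightarrow> real. \<exists>p :: nat \<Rightarrow> real^'d^'n.
      (\<forall>n. hs n \<ge> 0) \<and> hs \<longlonglongrightarrow> h \<and> filterlim (\<lambda>n. mnorm m (p n)) at_top sequentially \<and>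
      (\<forall>K. compact K \<longrightarrow> (\<forall>e>0. \<forall>\<^sub>F n in sequentially. \<forall>x\<in>K.
          phi m (hs n) 0 (p n) \<noteq> \<infinity> \<and> phi m (hs n) x (p n) \<noteq> \<infinity> \<and>
          \<bar>enn2real (phi m (hs n) 0 (p n)) - enn2real (phi m (hs n) x (p n)) - u x\<bar> < e))}"

end

(* Let g be an absolutely continuous path from x to y in time T. Concatenating g with paths
   from y to p gives the triangle inequality phi_h'(x,p) <= A_h'(g) + phi_h'(y,p), and changing
   the energy from h to h' changes A(g) by at most |h' - h| T. For u in B_h the differences
   phi_{h_n}(x,p_n) - phi_{h_n}(y,p_n) converge to u(y) - u(x), while the bounds
   A_h(g) + |h_n - h| T converge to A_h(g). Hence u(y) - u(x) <= A_h(g), and taking the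
   infimum over g gives u(y) - u(x) <= phi_h(x,y). *)

theory Submission
  imports Defs
begin

section \<open>Absolute continuity on intervals\<close>

definition short_interval_family :: "real \<Rightarrow> real \<Rightarrow> real \<Rightarrow> (real \<times> real) set \<Rightarrow> bool" where
  "short_interval_family a b d D \<longleftrightarrow> finite D \<and> (\<forall>p\<in>D. a \<le> fst p \<and> fst p < snd p \<and> snd p \<le> b)
      \<and> disjoint_family_on (\<lambda>p. {fst p<..<snd p}) D \<and> (\<Sum>p\<in>D. snd p - fst p) < d"

lemma abs_cont_on_iff:
  "abs_cont_on a b f \<longleftrightarrow> (\<forall>e>0. \<exists>d>0. \<forall>D. short_interval_family a b d D
      \<longrightarrow> (\<Sum>p\<in>D. norm (f (snd p) - f (fst p))) < e)"
  unfolding abs_cont_on_def case_prod_unfold short_interval_family_def by simp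

lemma abs_cont_onD:
  assumes "abs_cont_on a b f" "e > 0"
  obtains d where "d > 0"
    "\<And>D. short_interval_family a b d D \<Longrightarrow> (\<Sum>p\<in>D. norm (f (snd p) - f (fst p))) < e"
  using assms unfolding abs_cont_on_iff by blast

lemma abs_cont_on_cong:
  assumes "abs_cont_on a b f" "\<And>t. a \<le> t \<Longrightarrow> t \<le> b \<Longrightarrow> f t = g t"
  shows "abs_cont_on a b g"
  unfolding abs_cont_on_iff
proof (intro allI impI)
  fix e :: real assume "e > 0"
  then obtain d where "d > 0" and
    d: "\<And>D. short_interval_family a b d D \<Longrightarrow> (\<Sum>p\<in>D. norm (f (snd p) - f (fst p))) < e"
    using abs_cont_onD[OF assms(1)] by metis
  have "(\<Sum>p\<in>D. norm (g (snd p) - g (fst p))) = (\<Sum>p\<in>D. norm (f (snd p) - f (fst p)))"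
    if "short_interval_family a b d D" for D
    using that assms(2) unfolding short_interval_family_def by (intro sum.cong) auto
  with d \<open>d > 0\<close> show "\<exists>d>0. \<forall>D. short_interval_family a b d D
      \<longrightarrow> (\<Sum>p\<in>D. norm (g (snd p) - g (fst p))) < e"
    by metis
qed

lemma disjoint_family_on_image:
  "disjoint_family_on (\<lambda>i. A (g i)) I \<Longrightarrow> disjoint_family_on A (g ` I)"
  unfolding disjoint_family_on_def by fastforce

lemma short_interval_family_translate:
  assumes "short_interval_family (a + c) (b + c) d D"
  shows "short_interval_family a b d ((\<lambda>p. (fst p - c, snd p - c)) ` D)"
    and "inj_on (\<lambda>p. (fst p - c, snd p - c)) D"
proof -
  show inj: "inj_on (\<lambda>p. (fst p - c, snd p - c)) D"
    by (auto simp: inj_on_def prod_eq_iff)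
  have "{fst p - c<..<snd p - c} = (\<lambda>x. x + c) -` {fst p<..<snd p}" for p :: "real \<times> real"
    by auto
  then have "disjoint_family_on (\<lambda>p. {fst p - c<..<snd p - c}) D"
    using assms by (simp add: short_interval_family_def disjoint_family_on_vimageI)
  then have "disjoint_family_on (\<lambda>p. {fst p<..<snd p}) ((\<lambda>p. (fst p - c, snd p - c)) ` D)"
    by (intro disjoint_family_on_image) simp
  with assms show "short_interval_family a b d ((\<lambda>p. (fst p - c, snd p - c)) ` D)"
    by (auto simp: short_interval_family_def sum.reindex[OF inj])
qed

lemma abs_cont_on_translate:
  assumes "abs_cont_on a b f"
  shows "abs_cont_on (a + c) (b + c) (\<lambda>t. f (t - c))"
  unfolding abs_cont_on_iff
proof (intro allI impI)
  fix e :: real assume "e > 0"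
  then obtain d where "d > 0" and
    d: "\<And>D. short_interval_family a b d D \<Longrightarrow> (\<Sum>p\<in>D. norm (f (snd p) - f (fst p))) < e"
    using abs_cont_onD[OF assms] by metis
  have "(\<Sum>p\<in>D. norm (f (snd p - c) - f (fst p - c))) < e"
    if "short_interval_family (a + c) (b + c) d D" for D
    using d[OF short_interval_family_translate(1)[OF that]]
    by (simp add: sum.reindex[OF short_interval_family_translate(2)[OF that]])
  with \<open>d > 0\<close> show "\<exists>d>0. \<forall>D. short_interval_family (a + c) (b + c) d D
      \<longrightarrow> (\<Sum>p\<in>D. norm (f (snd p - c) - f (fst p - c))) < e"
    by blast
qed

definition clip_interval :: "real \<Rightarrow> real \<Rightarrow> real \<times> real \<Rightarrow> real \<times> real" where
  "clip_interval lo hi p = (max (fst p) lo, min (snd p) hi)"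

lemma disjoint_family_on_image_shrink:
  assumes "disjoint_family_on A I" "\<And>i. i \<in> I \<Longrightarrow> A (g i) \<subseteq> A i" "\<And>i. i \<in> I \<Longrightarrow> A (g i) \<noteq> {}"
  shows "disjoint_family_on A (g ` I)" and "inj_on g I"
proof -
  show "disjoint_family_on A (g ` I)"
    using assms(1,2) by (intro disjoint_family_on_image) (fastforce simp: disjoint_family_on_def)
  show "inj_on g I"
  proof (rule inj_onI)
    fix i j assume "i \<in> I" "j \<in> I" "g i = g j"
    then have "A (g i) \<subseteq> A i \<inter> A j" using assms(2) by fastforce
    then show "i = j"
      using assms(1,3) \<open>i \<in> I\<close> \<open>j \<in> I\<close> unfolding disjoint_family_on_def by blast
  qed
qed

lemma short_interval_family_clip:
  fixes lo hi :: real
  assumes "short_interval_family a b d D"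
  defines "D' \<equiv> {p\<in>D. max (fst p) lo < min (snd p) hi}"
  shows "short_interval_family lo hi d (clip_interval lo hi ` D')" and "inj_on (clip_interval lo hi) D'"
proof -
  have D: "finite D" "disjoint_family_on (\<lambda>p. {fst p<..<snd p}) D" "(\<Sum>p\<in>D. snd p - fst p) < d"
    and lt: "\<And>p. p \<in> D \<Longrightarrow> fst p < snd p"
    using assms(1) by (auto simp: short_interval_family_def)
  have sub: "{fst (clip_interval lo hi p)<..<snd (clip_interval lo hi p)} \<subseteq> {fst p<..<snd p}" for p
    by (auto simp: clip_interval_def)
  have ne: "{fst (clip_interval lo hi p)<..<snd (clip_interval lo hi p)} \<noteq> {}" if "p \<in> D'" for p
    using that unfolding D'_def clip_interval_def by (auto simp: not_le)
  have "disjoint_family_on (\<lambda>p. {fst p<..<snd p}) D'"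
    using D(2) disjoint_family_on_mono[of D' D] by (auto simp: D'_def)
  from disjoint_family_on_image_shrink[OF this sub ne]
  have disj: "disjoint_family_on (\<lambda>p. {fst p<..<snd p}) (clip_interval lo hi ` D')"
    and inj: "inj_on (clip_interval lo hi) D'"
    by blast+
  show "inj_on (clip_interval lo hi) D'" by (fact inj)
  have "(\<Sum>p\<in>clip_interval lo hi ` D'. snd p - fst p)
      = (\<Sum>p\<in>D'. snd (clip_interval lo hi p) - fst (clip_interval lo hi p))"
    by (simp add: sum.reindex[OF inj])
  also have "\<dots> \<le> (\<Sum>p\<in>D'. snd p - fst p)"
    by (intro sum_mono) (auto simp: clip_interval_def)
  also have "\<dots> \<le> (\<Sum>p\<in>D. snd p - fst p)"
    using D(1) lt by (intro sum_mono2) (auto simp: D'_def less_imp_le)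
  finally show "short_interval_family lo hi d (clip_interval lo hi ` D')"
    using D disj by (auto simp: short_interval_family_def D'_def clip_interval_def)
qed

lemma abs_cont_on_join:
  assumes "abs_cont_on a b f" "abs_cont_on b c f"
  shows "abs_cont_on a c f"
  unfolding abs_cont_on_iff
proof (intro allI impI)
  fix e :: real assume "e > 0"
  obtain d1 where "d1 > 0" and d1: "\<And>D. short_interval_family a b d1 D
      \<Longrightarrow> (\<Sum>p\<in>D. norm (f (snd p) - f (fst p))) < e / 2"
    using abs_cont_onD[OF assms(1)] \<open>e > 0\<close> by (metis half_gt_zero)
  obtain d2 where "d2 > 0" and d2: "\<And>D. short_interval_family b c d2 D
      \<Longrightarrow> (\<Sum>p\<in>D. norm (f (snd p) - f (fst p))) < e / 2"
    using abs_cont_onD[OF assms(2)] \<open>e > 0\<close> by (metis half_gt_zero)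
  define var where "var p = norm (f (snd p) - f (fst p))" for p :: "real \<times> real"
  have "(\<Sum>p\<in>D. var p) < e" if D: "short_interval_family a c (min d1 d2) D" for D
  proof -
    define D1 where "D1 = {p\<in>D. max (fst p) a < min (snd p) b}"
    define D2 where "D2 = {p\<in>D. max (fst p) b < min (snd p) c}"
    have "short_interval_family a c d1 D" "short_interval_family a c d2 D"
      using D by (auto simp: short_interval_family_def)
    note clip1 = short_interval_family_clip[OF this(1), of a b] and
      clip2 = short_interval_family_clip[OF this(2), of b c]
    have "var p \<le> (if p \<in> D1 then var (clip_interval a b p) else 0)
        + (if p \<in> D2 then var (clip_interval b c p) else 0)" if "p \<in> D" for p
    proof -
      have p: "a \<le> fst p" "fst p < snd p" "snd p \<le> c"
        using D \<open>p \<in> D\<close> by (auto simp: short_interval_family_def)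
      consider "snd p \<le> b" | "b \<le> fst p" | "fst p < b" "b < snd p" by linarith
      then show ?thesis
      proof cases
        case 3
        have "var p \<le> var (fst p, b) + var (b, snd p)"
          unfolding var_def using norm_triangle_ineq[of "f b - f (fst p)" "f (snd p) - f b"] by simp
        with 3 p show ?thesis by (simp add: D1_def D2_def clip_interval_def \<open>p \<in> D\<close>)
      qed (use p \<open>p \<in> D\<close> in \<open>auto simp: D1_def D2_def clip_interval_def var_def max_def min_def\<close>)
    qed
    then have "(\<Sum>p\<in>D. var p)
        \<le> (\<Sum>p\<in>D1. var (clip_interval a b p)) + (\<Sum>p\<in>D2. var (clip_interval b c p))"
      using D by (auto simp: short_interval_family_def D1_def D2_def sum.inter_filter sum.distrib[symmetric]
          intro!: sum_mono)
    also have "\<dots> = (\<Sum>p\<in>clip_interval a b ` D1. var p) + (\<Sum>p\<in>clip_interval b c ` D2. var p)"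
      using clip1(2) clip2(2) by (simp add: D1_def D2_def sum.reindex)
    also have "\<dots> < e / 2 + e / 2"
      using d1[OF clip1(1)] d2[OF clip2(1)] by (simp add: D1_def D2_def var_def)
    finally show ?thesis by simp
  qed
  then show "\<exists>d>0. \<forall>D. short_interval_family a c d D \<longrightarrow> (\<Sum>p\<in>D. norm (f (snd p) - f (fst p))) < e"
    using \<open>d1 > 0\<close> \<open>d2 > 0\<close> unfolding var_def by (metis min_less_iff_conj)
qed

lemma abs_cont_on_concat:
  assumes "abs_cont_on 0 T1 g1" "abs_cont_on 0 T2 g2" "g1 T1 = g2 0"
  shows "abs_cont_on 0 (T1 + T2) (\<lambda>t. if t \<le> T1 then g1 t else g2 (t - T1))"
proof (rule abs_cont_on_join)
  show "abs_cont_on 0 T1 (\<lambda>t. if t \<le> T1 then g1 t else g2 (t - T1))"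
    by (rule abs_cont_on_cong[OF assms(1)]) simp
  have "abs_cont_on T1 (T1 + T2) (\<lambda>t. g2 (t - T1))"
    using abs_cont_on_translate[OF assms(2), of T1] by (simp add: add.commute)
  then show "abs_cont_on T1 (T1 + T2) (\<lambda>t. if t \<le> T1 then g1 t else g2 (t - T1))"
    by (rule abs_cont_on_cong) (use assms(3) in auto)
qed

section \<open>Integrals of non-measurable functions\<close>

(* The action integrand involves the vector derivative of an arbitrary path and is not known
   to be measurable, so these lemmas allow arbitrary integrands and go through measurable
   minorants. *)
lemma nn_integral_le_by_measurable_minorants:
  assumes "\<And>g. g \<in> borel_measurable M \<Longrightarrow> (\<And>x. g x \<le> f x) \<Longrightarrow> integral\<^sup>N M g \<le> B"
  shows "integral\<^sup>N M f \<le> B"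
  unfolding nn_integral_def
proof (rule SUP_least)
  fix g assume "g \<in> {g. simple_function M g \<and> g \<le> f}"
  then have g: "simple_function M g" "g \<le> f" by auto
  then have "integral\<^sup>N M g \<le> B"
    using assms borel_measurable_simple_function by (auto simp: le_fun_def)
  then show "integral\<^sup>S M g \<le> B"
    using nn_integral_eq_simple_integral[OF g(1)] by simp
qed

lemma nn_integral_le_split:
  assumes "A \<in> sets M"
  shows "integral\<^sup>N M f \<le> (\<integral>\<^sup>+x. f x * indicator A x \<partial>M) + (\<integral>\<^sup>+x. f x * indicator (space M - A) x \<partial>M)"
proof (rule nn_integral_le_by_measurable_minorants)
  fix g assume [measurable]: "g \<in> borel_measurable M" and g: "\<And>x. g x \<le> f x"
  have "integral\<^sup>N M g = (\<integral>\<^sup>+x. g x * indicator A x + g x * indicator (space M - A) x \<partial>M)"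
    by (intro nn_integral_cong) (auto simp: indicator_def)
  also have "\<dots> = (\<integral>\<^sup>+x. g x * indicator A x \<partial>M) + (\<integral>\<^sup>+x. g x * indicator (space M - A) x \<partial>M)"
    using assms by (intro nn_integral_add) auto
  also have "\<dots> \<le> (\<integral>\<^sup>+x. f x * indicator A x \<partial>M) + (\<integral>\<^sup>+x. f x * indicator (space M - A) x \<partial>M)"
    using g by (intro add_mono nn_integral_mono mult_right_mono) auto
  finally show "integral\<^sup>N M g \<le> \<dots>" .
qed

lemma nn_integral_add_le:
  assumes [measurable]: "g \<in> borel_measurable M"
  shows "(\<integral>\<^sup>+x. f x + g x \<partial>M) \<le> integral\<^sup>N M f + integral\<^sup>N M g"
proof (rule nn_integral_le_by_measurable_minorants)
  fix s assume [measurable]: "s \<in> borel_measurable M" and s: "\<And>x. s x \<le> f x + g x"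
  \<comment> \<open>the case split is needed since \<infinity> - \<infinity> = \<infinity> in ennreal\<close>
  define r where "r x = (if g x = \<infinity> then 0 else s x - g x)" for x
  have [measurable]: "r \<in> borel_measurable M"
    unfolding r_def by measurable
  have "integral\<^sup>N M s \<le> (\<integral>\<^sup>+x. r x + g x \<partial>M)"
    by (intro nn_integral_mono) (auto simp: r_def diff_add_self_ennreal)
  also have "\<dots> = integral\<^sup>N M r + integral\<^sup>N M g"
    by (intro nn_integral_add) auto
  also have "\<dots> \<le> integral\<^sup>N M f + integral\<^sup>N M g"
    using s by (intro add_right_mono nn_integral_mono) (simp add: r_def ennreal_minus_le_iff add.commute)
  finally show "integral\<^sup>N M s \<le> integral\<^sup>N M f + integral\<^sup>N M g" .
qed

lemma nn_integral_lborel_translate: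
  fixes f :: "real \<Rightarrow> ennreal"
  shows "(\<integral>\<^sup>+x. f x \<partial>lborel) = (\<integral>\<^sup>+x. f (c + x) \<partial>lborel)"
proof -
  have le: "(\<integral>\<^sup>+x. f x \<partial>lborel) \<le> (\<integral>\<^sup>+x. f (c + x) \<partial>lborel)" for f :: "real \<Rightarrow> ennreal" and c
  proof (rule nn_integral_le_by_measurable_minorants)
    fix g :: "real \<Rightarrow> ennreal" assume "g \<in> borel_measurable lborel" and g: "\<And>x. g x \<le> f x"
    then have "(\<integral>\<^sup>+x. g x \<partial>lborel) = (\<integral>\<^sup>+x. g (c + x) \<partial>lborel)"
      using nn_integral_real_affine[of g 1 c] by simp
    also have "\<dots> \<le> (\<integral>\<^sup>+x. f (c + x) \<partial>lborel)"
      using g by (intro nn_integral_mono) simp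
    finally show "(\<integral>\<^sup>+x. g x \<partial>lborel) \<le> (\<integral>\<^sup>+x. f (c + x) \<partial>lborel)" .
  qed
  show ?thesis
    using le[of f c] le[of "\<lambda>x. f (c + x)" "- c"] by simp
qed

section \<open>Concatenation of paths\<close>

lemma vector_derivative_translate:
  fixes g :: "real \<Rightarrow> 'a::real_normed_vector"
  shows "vector_derivative (\<lambda>t. g (t - c)) (at t) = vector_derivative g (at (t - c))"
proof -
  have minus: "((\<lambda>t. t - c) has_vector_derivative 1) (at t)"
    and plus: "((\<lambda>t. t + c) has_vector_derivative 1) (at (t - c))"
    by (auto intro!: derivative_eq_intros)
  have "(g has_vector_derivative D) (at (t - c)) \<longleftrightarrow> ((\<lambda>t. g (t - c)) has_vector_derivative D) (at t)" for D
  proof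
    assume "(g has_vector_derivative D) (at (t - c))"
    from vector_diff_chain_at[OF minus this]
    show "((\<lambda>t. g (t - c)) has_vector_derivative D) (at t)" by (simp add: o_def)
  next
    assume "((\<lambda>t. g (t - c)) has_vector_derivative D) (at t)"
    then have "((\<lambda>t. g (t - c)) has_vector_derivative D) (at (t - c + c))" by simp
    from vector_diff_chain_at[OF plus this]
    show "(g has_vector_derivative D) (at (t - c))" by (simp add: o_def)
  qed
  then show ?thesis unfolding vector_derivative_def by simp
qed

lemma nn_integral_path_concat_le:
  fixes g1 g2 :: "real \<Rightarrow> 'a::real_normed_vector" and F :: "'a \<Rightarrow> 'a \<Rightarrow> ennreal"
  assumes "T1 \<ge> 0" "T2 \<ge> 0"
  defines "G \<equiv> \<lambda>t. if t \<le> T1 then g1 t else g2 (t - T1)"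
  shows "(\<integral>\<^sup>+t\<in>{0..T1 + T2}. F (G t) (vector_derivative G (at t within {0..T1 + T2})) \<partial>lborel)
    \<le> (\<integral>\<^sup>+t\<in>{0..T1}. F (g1 t) (vector_derivative g1 (at t within {0..T1})) \<partial>lborel)
     + (\<integral>\<^sup>+t\<in>{0..T2}. F (g2 t) (vector_derivative g2 (at t within {0..T2})) \<partial>lborel)"
proof -
  define T where "T = T1 + T2"
  define F0 where "F0 t = F (G t) (vector_derivative G (at t within {0..T})) * indicator {0..T} t" for t
  have left: "F0 t * indicator {..T1} t
      = F (g1 t) (vector_derivative g1 (at t within {0..T1})) * indicator {0..T1} t"
    if "t \<noteq> 0" "t \<noteq> T1" for t
  proof (cases "0 < t \<and> t < T1")
    case True
    have "eventually (\<lambda>s. s \<in> UNIV \<longrightarrow> G s = g1 s) (nhds t)"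
      using eventually_nhds_in_open[of "{..<T1}" t] True by (auto simp: G_def elim: eventually_mono)
    then have "vector_derivative G (at t) = vector_derivative g1 (at t)"
      by (rule vector_derivative_cong_eq) auto
    with True assms(2) show ?thesis
      by (simp add: F0_def T_def G_def at_within_Icc_at)
  qed (use that assms in \<open>auto simp: F0_def T_def\<close>)
  have right: "F0 (T1 + t) * indicator (UNIV - {..T1}) (T1 + t)
      = F (g2 t) (vector_derivative g2 (at t within {0..T2})) * indicator {0..T2} t"
    if "t \<noteq> 0" "t \<noteq> T2" for t
  proof (cases "0 < t \<and> t < T2")
    case True
    have "eventually (\<lambda>s. s \<in> UNIV \<longrightarrow> G s = g2 (s - T1)) (nhds (T1 + t))"
      using eventually_nhds_in_open[of "{T1<..}" "T1 + t"] True by (auto simp: G_def elim: eventually_mono)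
    then have "vector_derivative G (at (T1 + t)) = vector_derivative g2 (at t)"
      using vector_derivative_translate[of g2 T1 "T1 + t"] by (simp add: vector_derivative_cong_eq)
    with True assms(1) show ?thesis
      by (simp add: F0_def T_def G_def at_within_Icc_at)
  qed (use that assms in \<open>auto simp: F0_def T_def\<close>)
  have AE_off_two_points: "AE t in lborel. t \<noteq> a \<and> t \<noteq> b" for a b :: real
    using AE_lborel_singleton[of a] AE_lborel_singleton[of b] by eventually_elim auto
  have "(\<integral>\<^sup>+t. F0 t \<partial>lborel)
      \<le> (\<integral>\<^sup>+t. F0 t * indicator {..T1} t \<partial>lborel) + (\<integral>\<^sup>+t. F0 t * indicator (UNIV - {..T1}) t \<partial>lborel)"
    using nn_integral_le_split[of "{..T1}" lborel F0] by simp
  also have "(\<integral>\<^sup>+t. F0 t * indicator {..T1} t \<partial>lborel)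
      = (\<integral>\<^sup>+t\<in>{0..T1}. F (g1 t) (vector_derivative g1 (at t within {0..T1})) \<partial>lborel)"
    by (rule nn_integral_cong_AE, rule eventually_mono[OF AE_off_two_points[of 0 T1]]) (simp add: left)
  also have "(\<integral>\<^sup>+t. F0 t * indicator (UNIV - {..T1}) t \<partial>lborel)
      = (\<integral>\<^sup>+t. F0 (T1 + t) * indicator (UNIV - {..T1}) (T1 + t) \<partial>lborel)"
    by (rule nn_integral_lborel_translate)
  also have "\<dots> = (\<integral>\<^sup>+t\<in>{0..T2}. F (g2 t) (vector_derivative g2 (at t within {0..T2})) \<partial>lborel)"
    by (rule nn_integral_cong_AE, rule eventually_mono[OF AE_off_two_points[of 0 T2]]) (simp add: right)
  finally show ?thesis
    by (simp add: F0_def T_def)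
qed

section \<open>The action and the potential phi\<close>

lemma INF_image_ennreal_const_add:
  fixes f :: "'i \<Rightarrow> ennreal"
  shows "(INF i\<in>I. c + f i) = c + (INF i\<in>I. f i)"
proof (cases "I = {}")
  case False
  have "continuous (at_right (Inf (f ` I))) (\<lambda>x. c + x)"
    by (intro continuous_add continuous_const continuous_ident)
  then show ?thesis
    using continuous_at_Inf_mono[of "\<lambda>x. c + x" "f ` I"] False
    by (auto simp: mono_def image_comp add_left_mono)
qed simp

lemma action_concat_le:
  fixes g1 g2 :: "real \<Rightarrow> real^'d^'n::finite"
  assumes "T1 \<ge> 0" "T2 \<ge> 0"
  shows "action m h 0 (T1 + T2) (\<lambda>t. if t \<le> T1 then g1 t else g2 (t - T1))
    \<le> action m h 0 T1 g1 + action m h 0 T2 g2"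
  unfolding action_def using assms by (rule nn_integral_path_concat_le)

lemma action_le_action_add:
  fixes g :: "real \<Rightarrow> real^'d^'n::finite"
  assumes "a \<le> b"
  shows "action m h' a b g \<le> action m h a b g + ennreal (\<bar>h' - h\<bar> * (b - a))"
proof -
  define L where "L t = Lag m (g t) (vector_derivative g (at t within {a..b}))" for t
  have "ennreal h' \<le> ennreal h + ennreal \<bar>h' - h\<bar>"
    by (cases "h \<ge> 0"; cases "h' \<ge> 0") (auto simp: ennreal_neg simp flip: ennreal_plus intro: ennreal_leI)
  then have "(L t + ennreal h') * indicator {a..b} t
      \<le> (L t + ennreal h) * indicator {a..b} t + ennreal \<bar>h' - h\<bar> * indicator {a..b} t" for t
    by (auto simp: indicator_def add.assoc intro: add_left_mono)
  then have "action m h' a b g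
      \<le> (\<integral>\<^sup>+t. (L t + ennreal h) * indicator {a..b} t + ennreal \<bar>h' - h\<bar> * indicator {a..b} t \<partial>lborel)"
    unfolding action_def L_def by (intro nn_integral_mono)
  also have "\<dots> \<le> action m h a b g + (\<integral>\<^sup>+t. ennreal \<bar>h' - h\<bar> * indicator {a..b} t \<partial>lborel)"
    unfolding action_def L_def by (intro nn_integral_add_le) simp
  also have "(\<integral>\<^sup>+t. ennreal \<bar>h' - h\<bar> * indicator {a..b} t \<partial>lborel) = ennreal (\<bar>h' - h\<bar> * (b - a))"
    using assms by (simp add: nn_integral_cmult_indicator ennreal_mult)
  finally show ?thesis .
qed

lemma phi_le_action:
  "T > 0 \<Longrightarrow> abs_cont_on 0 T g \<Longrightarrow> g 0 = x \<Longrightarrow> g T = y \<Longrightarrow> phi m h x y \<le> action m h 0 T g"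
  unfolding phi_def by (rule INF_lower2[of "(T, g)"]) auto

lemma phi_le_action_add_phi:
  fixes g :: "real \<Rightarrow> real^'d^'n::finite"
  assumes "T > 0" "abs_cont_on 0 T g" "g 0 = x" "g T = y"
  shows "phi m h x z \<le> action m h 0 T g + phi m h y z"
proof -
  have "phi m h x z \<le> action m h 0 T g + action m h 0 T' g'"
    if "T' > 0" "abs_cont_on 0 T' g'" "g' 0 = y" "g' T' = z" for T' g'
  proof -
    have "phi m h x z \<le> action m h 0 (T + T') (\<lambda>t. if t \<le> T then g t else g' (t - T))"
      using assms that by (intro phi_le_action abs_cont_on_concat) auto
    also have "\<dots> \<le> action m h 0 T g + action m h 0 T' g'"
      using assms(1) that(1) by (intro action_concat_le) auto
    finally show ?thesis .
  qed
  then have "phi m h x z \<le> (INF (T', g')\<in>{(T', g'). T' > 0 \<and> abs_cont_on 0 T' g' \<and> g' 0 = y \<and> g' T' = z}.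
      action m h 0 T g + action m h 0 T' g')"
    by (intro INF_greatest) auto
  also have "\<dots> = action m h 0 T g + phi m h y z"
    unfolding phi_def case_prod_beta' by (rule INF_image_ennreal_const_add)
  finally show ?thesis .
qed

lemma Bh_tendsto:
  assumes "u \<in> Bh m h"
  obtains hs :: "nat \<Rightarrow> real" and p where "hs \<longlonglongrightarrow> h"
    "\<And>x. eventually (\<lambda>n. phi m (hs n) x (p n) \<noteq> \<infinity>) sequentially"
    "\<And>x. (\<lambda>n. enn2real (phi m (hs n) 0 (p n)) - enn2real (phi m (hs n) x (p n))) \<longlonglongrightarrow> u x"
proof -
  obtain hs p where "hs \<longlonglongrightarrow> h" and conv: "\<And>K e. compact K \<Longrightarrow> e > 0 \<Longrightarrow>
      \<forall>\<^sub>F n in sequentially. \<forall>x\<in>K. phi m (hs n) 0 (p n) \<noteq> \<infinity> \<and> phi m (hs n) x (p n) \<noteq> \<infinity> \<and>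
        \<bar>enn2real (phi m (hs n) 0 (p n)) - enn2real (phi m (hs n) x (p n)) - u x\<bar> < e"
    using assms unfolding Bh_def by blast
  have conv_at: "\<forall>\<^sub>F n in sequentially. phi m (hs n) x (p n) \<noteq> \<infinity> \<and>
      \<bar>enn2real (phi m (hs n) 0 (p n)) - enn2real (phi m (hs n) x (p n)) - u x\<bar> < e" if "e > 0" for x e
    using conv[of "{x}" e] that by (auto elim: eventually_mono)
  show ?thesis
  proof
    show "hs \<longlonglongrightarrow> h" by fact
    show "eventually (\<lambda>n. phi m (hs n) x (p n) \<noteq> \<infinity>) sequentially" for x
      using conv_at[of 1 x] by (auto elim: eventually_mono)
    show "(\<lambda>n. enn2real (phi m (hs n) 0 (p n)) - enn2real (phi m (hs n) x (p n))) \<longlonglongrightarrow> u x" for x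
    proof (rule tendstoI)
      fix e :: real assume "e > 0"
      from conv_at[OF this, of x] show "\<forall>\<^sub>F n in sequentially.
          dist (enn2real (phi m (hs n) 0 (p n)) - enn2real (phi m (hs n) x (p n))) (u x) < e"
        by (auto simp: dist_real_def elim: eventually_mono)
    qed
  qed
qed

lemma Bh_le_action:
  fixes u :: "real^'d^'n::finite \<Rightarrow> real"
  assumes "u \<in> Bh m h" "T > 0" "abs_cont_on 0 T g" "g 0 = x" "g T = y" "action m h 0 T g \<noteq> \<infinity>"
  shows "u y - u x \<le> enn2real (action m h 0 T g)"
proof -
  obtain hs p where hs: "hs \<longlonglongrightarrow> h"
    and fin: "\<And>z. eventually (\<lambda>n. phi m (hs n) z (p n) \<noteq> \<infinity>) sequentially"
    and conv: "\<And>z. (\<lambda>n. enn2real (phi m (hs n) 0 (p n)) - enn2real (phi m (hs n) z (p n))) \<longlonglongrightarrow> u z"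
    using Bh_tendsto[OF assms(1)] by blast
  define A where "A = action m h 0 T g"
  define \<phi> where "\<phi> n z = phi m (hs n) z (p n)" for n z
  have "(\<lambda>n. enn2real (\<phi> n x) - enn2real (\<phi> n y)) \<longlonglongrightarrow> u y - u x"
    using tendsto_diff[OF conv[of y] conv[of x]] by (simp add: \<phi>_def)
  moreover have "(\<lambda>n. enn2real A + \<bar>hs n - h\<bar> * T) \<longlonglongrightarrow> enn2real A"
  proof -
    have "(\<lambda>n. \<bar>hs n - h\<bar> * T) \<longlonglongrightarrow> 0"
      using hs by (intro tendsto_mult_left_zero tendsto_rabs_zero) (simp add: LIM_zero)
    from tendsto_add[OF tendsto_const this] show ?thesis by simp
  qed
  moreover have "\<forall>\<^sub>F n in sequentially.
      enn2real (\<phi> n x) - enn2real (\<phi> n y) \<le> enn2real A + \<bar>hs n - h\<bar> * T"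
    using fin[of x] fin[of y]
  proof eventually_elim
    case (elim n)
    have "\<phi> n x \<le> action m (hs n) 0 T g + \<phi> n y"
      unfolding \<phi>_def using assms(2-5) by (rule phi_le_action_add_phi)
    also have "\<dots> \<le> A + ennreal (\<bar>hs n - h\<bar> * T) + \<phi> n y"
      using action_le_action_add[where a=0 and b=T and h'="hs n" and h=h and g=g and m=m] assms(2)
      by (simp add: A_def add_right_mono)
    finally have "enn2real (\<phi> n x) \<le> enn2real (A + ennreal (\<bar>hs n - h\<bar> * T) + \<phi> n y)"
      using elim assms(6) by (intro enn2real_mono) (auto simp: A_def \<phi>_def top.not_eq_extremum)
    then show ?case
      using elim assms(2,6) by (simp add: A_def \<phi>_def enn2real_plus top.not_eq_extremum)
  qed
  ultimately show ?thesis
    unfolding A_def by (intro tendsto_le[OF trivial_limit_sequentially])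
qed

theorem lemma2p8:
  fixes m :: "'n::finite \<Rightarrow> real" and h :: real and u :: "real^'d^'n \<Rightarrow> real"
  assumes "CARD('d) \<ge> 2" and "\<forall>i. m i > 0" and "h \<ge> 0" and "u \<in> Bh m h"
  shows "\<forall>x y. ereal (u y - u x) \<le> enn2ereal (phi m h x y)"
proof (intro allI)
  fix x y :: "real^'d^'n"
  have "ennreal (u y - u x) \<le> action m h 0 T g"
    if "T > 0" "abs_cont_on 0 T g" "g 0 = x" "g T = y" for T g
  proof (cases "action m h 0 T g = \<infinity>")
    case False
    have "ennreal (u y - u x) \<le> ennreal (enn2real (action m h 0 T g))"
      using Bh_le_action[OF assms(4) that False] by (rule ennreal_leI)
    with False show ?thesis
      by (simp add: ennreal_enn2real top.not_eq_extremum)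
  qed simp
  then have "ennreal (u y - u x) \<le> phi m h x y"
    unfolding phi_def by (intro INF_greatest) auto
  show "ereal (u y - u x) \<le> enn2ereal (phi m h x y)"
  proof (cases "u y - u x \<le> 0")
    case True
    then have "ereal (u y - u x) \<le> 0" by simp
    also have "0 \<le> enn2ereal (phi m h x y)" by (rule enn2ereal_nonneg)
    finally show ?thesis .
  next
    case False
    then show ?thesis using \<open>ennreal (u y - u x) \<le> phi m h x y\<close> by (simp add: less_eq_ennreal.rep_eq)
  qed
qed

end
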